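(* Let $n\ge 2$ and let $\Omega$ be an open proper subset of $\mathbb{R}^n$ having the outer regularity property with constant $b>0$. Let $\kappa\in[0,1)$. Then there is a constant $c=c(n,b,\kappa)$ such that for every $u\in C^1_0(\Omega)$, \[ |u(x)|\le c\,\operatorname{dist}(x,\partial\Omega)^{1-\kappa}\,M_\kappa|\nabla u|(x)\quad\text{for all }x\in\Omega . \]
   Context: An open proper subset $\Omega\subset\mathbb{R}^n$ has the outer regularity property with constant $b>0$ if $|B(y,r)\setminus\Omega|\ge b|B(y,r)|$ for every $y\in\partial\Omega$ and every $r>0$ ($|\cdot|$ is Lebesgue measure). For $\kappa\in[0,n)$ and $f\in L^1_{loc}(\mathbb{R}^n)$, the fractional centred maximal function is $M_\kappa f(x)=\sup_{r>0} r^{\kappa-n}\int_{B(x,r)}|f(y)|\,dy$; a function defined only on $\Omega$ is extended by $0$ outside $\Omega$. $C^1_0(\Omega)$ denotes continuously differentiable functions with compact support in $\Omega$. *)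

theory Defs
  imports "HOL-Analysis.Analysis"
begin

definition outer_regular :: "real \<Rightarrow> ('a::euclidean_space) set \<Rightarrow> bool" where
  "outer_regular b \<Omega> \<longleftrightarrow>
     (\<forall>y\<in>frontier \<Omega>. \<forall>r>0.
        measure lebesgue (ball y r - \<Omega>) \<ge> b * measure lebesgue (ball y r))"

definition frac_max :: "real \<Rightarrow> (('a::euclidean_space) \<Rightarrow> real) \<Rightarrow> 'a \<Rightarrow> ennreal" where
  "frac_max \<kappa> f x =
     (SUP r\<in>{0<..}. ennreal (r powr (\<kappa> - real DIM('a))) *
        (\<integral>\<^sup>+ y\<in>ball x r. ennreal \<bar>f y\<bar> \<partial>lebesgue))"

end

theory Submission
  imports Defs
begin

text \<open>Let \<open>y\<close> be a boundary point nearest to \<open>x\<close> and \<open>d = dist x y\<close>. By outer regularity the set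
  \<open>E = B(y,d) - \<Omega>\<close> has measure at least \<open>b |B(0,1)| d^n\<close>; it lies in \<open>B(x,2d)\<close> and \<open>u\<close> vanishes on
  it. Write \<open>u(x) = u(x) - u(z)\<close> for \<open>z \<in> E\<close> as an integral of \<open>\<nabla>u\<close> along the segment
  \<open>x + s(z - x)\<close>, integrate over \<open>E\<close> and exchange the order of integration. For fixed \<open>s\<close> the
  integral over \<open>z\<close> is \<open>s^-n\<close> times the integral of \<open>|\<nabla>u|\<close> over \<open>B(x,2ds)\<close>, hence at most
  \<open>s^-n (2ds)^(n-\<kappa>) M\<^sub>\<kappa>|\<nabla>u|(x)\<close>. So \<open>|u(x)| |E| \<le> (2d)^(n+1-\<kappa>) M\<^sub>\<kappa>|\<nabla>u|(x) \<integral>\<^sub>0\<^sup>1 s^-\<kappa> ds\<close>,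
  and the last integral is finite because \<open>\<kappa> < 1\<close>.\<close>

lemma nn_integral_lborel_affine:
  fixes f :: "'a::euclidean_space \<Rightarrow> ennreal" and c :: real
  assumes [measurable]: "f \<in> borel_measurable borel" and c: "c \<noteq> 0"
  shows "(\<integral>\<^sup>+x. f x \<partial>lborel) = ennreal (\<bar>c\<bar> ^ DIM('a)) * (\<integral>\<^sup>+x. f (t + c *\<^sub>R x) \<partial>lborel)"
  by (subst lborel_affine[OF c, of t])
     (simp add: nn_integral_density nn_integral_distr nn_integral_cmult)

lemma nn_integral_unit_interval_powr:
  fixes p :: real
  assumes "p > -1"
  shows "(\<integral>\<^sup>+ s. indicator {0..1} s * ennreal (s powr p) \<partial>lborel) = ennreal (1 / (p + 1))"
proof -
  have "((\<lambda>s. s powr p) has_integral (1 / (p + 1))) {0..1::real}"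
    using has_integral_powr_from_0[of p 1] assms by simp
  then have "(\<integral>\<^sup>+ s. ennreal (indicator {0..1} s * s powr p) \<partial>lborel) = ennreal (1 / (p + 1))"
    by (subst nn_integral_has_integral_lebesgue) auto
  moreover have "(\<integral>\<^sup>+ s. ennreal (indicator {0..1} s * s powr p) \<partial>lborel)
      = (\<integral>\<^sup>+ s. indicator {0..1} s * ennreal (s powr p) \<partial>lborel)"
    by (intro nn_integral_cong) (simp split: split_indicator)
  ultimately show ?thesis by simp
qed

lemma ennreal_le_divide_mult_of_mult_le:
  assumes le: "ennreal a * e \<le> ennreal K * M" and m: "ennreal m \<le> e" "0 < m"
  shows "ennreal a \<le> ennreal (K / m) * M"
proof -
  have "ennreal a * ennreal m \<le> ennreal K * M"
    using le m(1) by (meson mult_left_mono order_trans zero_le)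
  then have "ennreal a * ennreal m * ennreal (1 / m) \<le> ennreal K * M * ennreal (1 / m)"
    by (rule mult_right_mono) simp
  then show ?thesis
    using m(2) by (cases "a \<ge> 0"; cases "K \<ge> 0") (auto simp: ennreal_mult'[symmetric] ennreal_neg mult_ac)
qed

lemma abs_diff_le_nn_integral_segment:
  fixes u :: "'a::euclidean_space \<Rightarrow> real" and g :: "'a \<Rightarrow> 'a"
  assumes der: "\<And>x. (u has_derivative (\<lambda>h. g x \<bullet> h)) (at x)" and g: "continuous_on UNIV g"
    and R: "norm (z - x) \<le> R"
  shows "ennreal \<bar>u z - u x\<bar>
    \<le> (\<integral>\<^sup>+ s. indicator {0..1} s * ennreal (R * norm (g (x + s *\<^sub>R (z - x)))) \<partial>lborel)"
proof -
  define \<gamma> where "\<gamma> s = x + s *\<^sub>R (z - x)" for s :: real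
  define F where "F s = norm (g (\<gamma> s)) * norm (z - x)" for s
  have "((u \<circ> \<gamma>) has_vector_derivative g (\<gamma> s) \<bullet> (z - x)) (at s within {0..1})" for s
  proof -
    have "(\<gamma> has_derivative (\<lambda>h. h *\<^sub>R (z - x))) (at s)"
      unfolding \<gamma>_def by (auto intro!: derivative_eq_intros)
    from has_derivative_compose[OF this der]
    show ?thesis
      by (auto simp: has_vector_derivative_def o_def algebra_simps intro: has_derivative_at_withinI)
  qed
  then have "((\<lambda>s. g (\<gamma> s) \<bullet> (z - x)) has_integral u z - u x) {0..1}"
    using fundamental_theorem_of_calculus[of 0 1 "u \<circ> \<gamma>"] by (simp add: \<gamma>_def)
  moreover have F: "F integrable_on {0..1}"
    unfolding F_def \<gamma>_def
    by (intro integrable_continuous_interval continuous_intros continuous_on_compose2[OF g]) auto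
  ultimately have "\<bar>u z - u x\<bar> \<le> integral {0..1} F"
    using integral_norm_bound_integral[of "\<lambda>s. g (\<gamma> s) \<bullet> (z - x)" "{0..1}" F]
    by (auto simp: F_def Cauchy_Schwarz_ineq2 integral_unique)
  also have "ennreal (integral {0..1} F) = (\<integral>\<^sup>+ s. ennreal (indicator {0..1} s * F s) \<partial>lborel)"
    using F by (subst nn_integral_has_integral_lebesgue) (auto simp: F_def)
  also have "\<dots> \<le> (\<integral>\<^sup>+ s. indicator {0..1} s * ennreal (R * norm (g (\<gamma> s))) \<partial>lborel)"
    using R by (intro nn_integral_mono)
      (auto simp: F_def mult.commute[of _ "norm (z - x)"] intro!: ennreal_leI mult_right_mono split: split_indicator)
  finally show ?thesis
    by (simp add: \<gamma>_def ennreal_leI)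
qed

lemma nn_integral_ball_le_frac_max:
  fixes f :: "'a::euclidean_space \<Rightarrow> real"
  assumes r: "r > 0"
  shows "(\<integral>\<^sup>+ y. indicator (ball x r) y * ennreal \<bar>f y\<bar> \<partial>lborel)
    \<le> ennreal (r powr (real DIM('a) - \<kappa>)) * frac_max \<kappa> f x"
proof -
  define I where "I = (\<integral>\<^sup>+ y. indicator (ball x r) y * ennreal \<bar>f y\<bar> \<partial>lborel)"
  have "I = (\<integral>\<^sup>+ y\<in>ball x r. ennreal \<bar>f y\<bar> \<partial>lebesgue)"
    unfolding I_def nn_integral_completion by (simp add: mult.commute)
  then have "ennreal (r powr (\<kappa> - real DIM('a))) * I \<le> frac_max \<kappa> f x"
    unfolding frac_max_def using r by (intro SUP_upper2[of r]) auto
  then have "ennreal (r powr (real DIM('a) - \<kappa>)) * (ennreal (r powr (\<kappa> - real DIM('a))) * I)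
      \<le> ennreal (r powr (real DIM('a) - \<kappa>)) * frac_max \<kappa> f x"
    by (rule mult_left_mono) simp
  moreover have "ennreal (r powr (real DIM('a) - \<kappa>)) * ennreal (r powr (\<kappa> - real DIM('a))) = 1"
    using r by (simp add: ennreal_mult'[symmetric] powr_add[symmetric])
  ultimately show ?thesis
    unfolding I_def[symmetric] by (simp add: mult.assoc[symmetric])
qed

lemma nn_integral_ball_dilated_le_frac_max:
  fixes g :: "'a::euclidean_space \<Rightarrow> 'a"
  assumes [measurable]: "g \<in> borel_measurable borel" and R: "R > 0" and s: "s > 0"
  shows "(\<integral>\<^sup>+ z. indicator (ball x R) z * ennreal (norm (g (x + s *\<^sub>R (z - x)))) \<partial>lborel)
    \<le> ennreal (R powr (real DIM('a) - \<kappa>) * s powr (-\<kappa>)) * frac_max \<kappa> (\<lambda>y. norm (g y)) x"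
proof -
  define n where "n = real DIM('a)"
  define h where "h w = indicator (ball x (R * s)) w * ennreal (norm (g w))" for w
  have [measurable]: "h \<in> borel_measurable borel"
    unfolding h_def indicator_def mem_ball by measurable
  have "dist x ((1 - s) *\<^sub>R x + s *\<^sub>R z) = s * dist x z" for z
  proof -
    have "x - ((1 - s) *\<^sub>R x + s *\<^sub>R z) = s *\<^sub>R (x - z)"
      by (simp add: algebra_simps)
    then show ?thesis
      using s by (simp add: dist_norm)
  qed
  then have "indicator (ball x R) z * ennreal (norm (g (x + s *\<^sub>R (z - x)))) = h ((1 - s) *\<^sub>R x + s *\<^sub>R z)"
    for z
    using s by (simp add: h_def mult.commute algebra_simps split: split_indicator)
  then have "(\<integral>\<^sup>+ z. indicator (ball x R) z * ennreal (norm (g (x + s *\<^sub>R (z - x)))) \<partial>lborel)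
      = (\<integral>\<^sup>+ z. h ((1 - s) *\<^sub>R x + s *\<^sub>R z) \<partial>lborel)"
    by simp
  also have "\<dots> = ennreal (1 / s ^ DIM('a)) * (\<integral>\<^sup>+ w. h w \<partial>lborel)"
  proof -
    have "ennreal (1 / s ^ DIM('a)) * ennreal (s ^ DIM('a)) = 1"
      using s by (simp add: ennreal_mult'[symmetric])
    then show ?thesis
      using nn_integral_lborel_affine[of h s "(1 - s) *\<^sub>R x"] s by (simp add: mult.assoc[symmetric])
  qed
  also have "\<dots> \<le> ennreal (1 / s ^ DIM('a)) * (ennreal ((R * s) powr (n - \<kappa>)) * frac_max \<kappa> (\<lambda>y. norm (g y)) x)"
    unfolding h_def n_def using nn_integral_ball_le_frac_max[of "R * s" x "\<lambda>y. norm (g y)" \<kappa>] R s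
    by (intro mult_left_mono) auto
  also have "\<dots> = ennreal (R powr (n - \<kappa>) * s powr (-\<kappa>)) * frac_max \<kappa> (\<lambda>y. norm (g y)) x"
  proof -
    have "1 / s ^ DIM('a) * (R * s) powr (n - \<kappa>) = R powr (n - \<kappa>) * s powr (-\<kappa>)"
      using R s by (simp add: n_def powr_mult powr_diff powr_realpow powr_minus field_simps)
    then show ?thesis
      using s by (simp add: ennreal_mult'[symmetric] mult.assoc[symmetric])
  qed
  finally show ?thesis
    unfolding n_def .
qed

lemma abs_mult_emeasure_le_frac_max:
  fixes u :: "'a::euclidean_space \<Rightarrow> real" and g :: "'a \<Rightarrow> 'a" and \<kappa> R :: real
  assumes der: "\<And>x. (u has_derivative (\<lambda>h. g x \<bullet> h)) (at x)" and g: "continuous_on UNIV g"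
    and E: "E \<in> sets lborel" "E \<subseteq> ball x R" "\<And>z. z \<in> E \<Longrightarrow> u z = 0"
    and R: "R > 0" and \<kappa>: "\<kappa> < 1"
  shows "ennreal \<bar>u x\<bar> * emeasure lborel E
    \<le> ennreal (R powr (real DIM('a) + 1 - \<kappa>) / (1 - \<kappa>)) * frac_max \<kappa> (\<lambda>y. norm (g y)) x"
proof -
  define n where "n = real DIM('a)"
  define M where "M = frac_max \<kappa> (\<lambda>y. norm (g y)) x"
  define G where "G z s = indicator (ball x R) z * indicator {0..1} s * ennreal (norm (g (x + s *\<^sub>R (z - x))))"
    for z and s :: real
  have [measurable]: "g \<in> borel_measurable borel"
    using g by (rule borel_measurable_continuous_onI)
  have G_measurable[measurable]: "(\<lambda>(z, s). G z s) \<in> borel_measurable (lborel \<Otimes>\<^sub>M lborel)"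
    unfolding G_def indicator_def mem_ball by measurable
  have "ennreal \<bar>u x\<bar> * emeasure lborel E = (\<integral>\<^sup>+ z. ennreal \<bar>u x\<bar> * indicator E z \<partial>lborel)"
    using E(1) by (simp add: nn_integral_cmult_indicator)
  also have "\<dots> \<le> (\<integral>\<^sup>+ z. ennreal R * (\<integral>\<^sup>+ s. G z s \<partial>lborel) \<partial>lborel)"
  proof (rule nn_integral_mono)
    fix z
    show "ennreal \<bar>u x\<bar> * indicator E z \<le> ennreal R * (\<integral>\<^sup>+ s. G z s \<partial>lborel)"
    proof (cases "z \<in> E")
      case True
      then have "z \<in> ball x R" "norm (z - x) \<le> R"
        using E(2) by (auto simp: dist_norm norm_minus_commute)
      moreover have "ennreal R * G z s = indicator {0..1} s * ennreal (R * norm (g (x + s *\<^sub>R (z - x))))"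
        if "z \<in> ball x R" for s
        using R that by (simp add: G_def ennreal_mult mult.left_commute)
      ultimately show ?thesis
        using abs_diff_le_nn_integral_segment[OF der g, of z x R] E(3)[OF True] True
        by (simp add: nn_integral_cmult[symmetric])
    qed simp
  qed
  also have "\<dots> = ennreal R * (\<integral>\<^sup>+ s. (\<integral>\<^sup>+ z. G z s \<partial>lborel) \<partial>lborel)"
    using lborel_pair.Fubini'[OF G_measurable] by (simp add: nn_integral_cmult)
  also have "\<dots> \<le> ennreal R * (\<integral>\<^sup>+ s. ennreal (R powr (n - \<kappa>)) * M * (indicator {0..1} s * ennreal (s powr (-\<kappa>))) \<partial>lborel)"
  proof (intro mult_left_mono nn_integral_mono_AE, rule AE_mp[OF AE_lborel_singleton[of 0]], intro AE_I2 impI)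
    fix s :: real
    assume "s \<noteq> 0"
    show "(\<integral>\<^sup>+ z. G z s \<partial>lborel) \<le> ennreal (R powr (n - \<kappa>)) * M * (indicator {0..1} s * ennreal (s powr (-\<kappa>)))"
    proof (cases "s \<in> {0..1}")
      case True
      with \<open>s \<noteq> 0\<close> have "s > 0"
        by auto
      with R nn_integral_ball_dilated_le_frac_max[of g R s x \<kappa>] show ?thesis
        using True by (simp add: G_def M_def n_def ennreal_mult mult_ac)
    qed (simp add: G_def)
  qed simp
  also have "\<dots> = ennreal R * (ennreal (R powr (n - \<kappa>)) * M * ennreal (1 / (1 - \<kappa>)))"
    using \<kappa> nn_integral_unit_interval_powr[of "-\<kappa>"] by (subst nn_integral_cmult) auto
  also have "\<dots> = ennreal (R * R powr (n - \<kappa>) / (1 - \<kappa>)) * M"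
    using R \<kappa> by (simp add: ennreal_mult'[symmetric] mult_ac)
  also have "R * R powr (n - \<kappa>) = R powr (n + 1 - \<kappa>)"
    using R powr_add[of R 1 "n - \<kappa>"] by (simp add: algebra_simps)
  finally show ?thesis
    unfolding n_def M_def .
qed

lemma outer_regular_emeasure_ball_diff_ge:
  fixes \<Omega> :: "'a::euclidean_space set"
  assumes "open \<Omega>" "outer_regular b \<Omega>" "y \<in> frontier \<Omega>" "r > 0"
  shows "ennreal (b * (r ^ DIM('a) * measure lborel (ball (0::'a) 1))) \<le> emeasure lborel (ball y r - \<Omega>)"
proof -
  have sets: "ball y r - \<Omega> \<in> sets lborel"
    using assms(1) by auto
  have "b * measure lebesgue (ball y r) \<le> measure lebesgue (ball y r - \<Omega>)"
    using assms(2-4) unfolding outer_regular_def by blast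
  then have "b * measure lborel (ball y r) \<le> measure lborel (ball y r - \<Omega>)"
    using measure_completion[OF sets] by simp
  moreover have "emeasure lborel (ball y r - \<Omega>) \<le> emeasure lborel (ball y r)"
    by (rule emeasure_mono) auto
  then have "emeasure lborel (ball y r - \<Omega>) = ennreal (measure lborel (ball y r - \<Omega>))"
    using emeasure_lborel_ball_finite[of y r] by (intro emeasure_eq_ennreal_measure) (auto simp: top_unique)
  ultimately show ?thesis
    using content_ball_conv_unit_ball[of r y] assms(4) by (simp add: ennreal_leI)
qed

lemma abs_le_infdist_frontier_powr_frac_max:
  fixes \<Omega> :: "'a::euclidean_space set" and u :: "'a \<Rightarrow> real" and g :: "'a \<Rightarrow> 'a" and b \<kappa> :: real
  assumes \<Omega>: "open \<Omega>" "\<Omega> \<noteq> UNIV" "outer_regular b \<Omega>" and b: "b > 0"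
    and der: "\<And>x. (u has_derivative (\<lambda>h. g x \<bullet> h)) (at x)" and g: "continuous_on UNIV g"
    and supp: "closure {x. u x \<noteq> 0} \<subseteq> \<Omega>" and x: "x \<in> \<Omega>" and \<kappa>: "\<kappa> < 1"
  shows "ennreal \<bar>u x\<bar>
    \<le> ennreal (2 powr (real DIM('a) + 1 - \<kappa>) / ((1 - \<kappa>) * b * measure lborel (ball (0::'a) 1))
         * infdist x (frontier \<Omega>) powr (1 - \<kappa>)) * frac_max \<kappa> (\<lambda>y. norm (g y)) x"
proof -
  define n where "n = real DIM('a)"
  define V where "V = measure lborel (ball (0::'a) 1)"
  define d where "d = infdist x (frontier \<Omega>)"
  have V: "V > 0"
    unfolding V_def by (rule content_ball_pos) simp
  have "frontier \<Omega> \<noteq> {}"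
    using frontier_eq_empty[of \<Omega>] x \<Omega>(2) by auto
  then obtain y where y: "y \<in> frontier \<Omega>" "d = dist x y"
    using infdist_attains_inf[OF frontier_closed] unfolding d_def by blast
  have "x \<notin> frontier \<Omega>"
    using x \<Omega>(1) by (simp add: frontier_def interior_open)
  then have d: "d > 0"
    using y by auto
  define E where "E = ball y d - \<Omega>"
  have "E \<subseteq> ball x (2 * d)"
  proof
    fix z
    assume "z \<in> E"
    then show "z \<in> ball x (2 * d)"
      using y(2) dist_triangle[of x z y] by (simp add: E_def)
  qed
  moreover have "u z = 0" if "z \<in> E" for z
    using that supp closure_subset[of "{x. u x \<noteq> 0}"] unfolding E_def by blast
  ultimately have "ennreal \<bar>u x\<bar> * emeasure lborel E
      \<le> ennreal ((2 * d) powr (n + 1 - \<kappa>) / (1 - \<kappa>)) * frac_max \<kappa> (\<lambda>y. norm (g y)) x"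
    unfolding n_def using \<Omega>(1) d \<kappa>
    by (intro abs_mult_emeasure_le_frac_max[OF der g]) (auto simp: E_def)
  moreover have "ennreal (b * (d ^ DIM('a) * V)) \<le> emeasure lborel E"
    unfolding E_def V_def using \<Omega> y d by (intro outer_regular_emeasure_ball_diff_ge) auto
  ultimately have "ennreal \<bar>u x\<bar>
      \<le> ennreal ((2 * d) powr (n + 1 - \<kappa>) / (1 - \<kappa>) / (b * (d ^ DIM('a) * V))) * frac_max \<kappa> (\<lambda>y. norm (g y)) x"
    using b d V by (intro ennreal_le_divide_mult_of_mult_le) auto
  also have "(2 * d) powr (n + 1 - \<kappa>) / (1 - \<kappa>) / (b * (d ^ DIM('a) * V))
      = 2 powr (n + 1 - \<kappa>) / ((1 - \<kappa>) * b * V) * d powr (1 - \<kappa>)"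
  proof -
    have "d ^ DIM('a) = d powr n"
      using d by (simp add: n_def powr_realpow)
    moreover have "(2 * d) powr (n + 1 - \<kappa>) = 2 powr (n + 1 - \<kappa>) * (d powr n * d powr (1 - \<kappa>))"
      using d by (simp add: powr_mult powr_add[symmetric] add_diff_eq)
    moreover have "d powr n > 0"
      using d by simp
    ultimately show ?thesis
      using V b \<kappa> by (simp add: field_simps)
  qed
  finally show ?thesis
    unfolding n_def V_def d_def .
qed

theorem proposition3p2:
  fixes b \<kappa> :: real
  assumes "DIM('a::euclidean_space) \<ge> 2"
    and "b > 0"
    and "0 \<le> \<kappa>" and "\<kappa> < 1"
  shows "\<exists>c>0. \<forall>(\<Omega>::'a set) (u::'a \<Rightarrow> real) (g::'a \<Rightarrow> 'a).
           open \<Omega> \<and> \<Omega> \<noteq> UNIV \<and> outer_regular b \<Omega>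
           \<and> (\<forall>x. (u has_derivative (\<lambda>h. g x \<bullet> h)) (at x)) \<and> continuous_on UNIV g
           \<and> compact (closure {x. u x \<noteq> 0}) \<and> closure {x. u x \<noteq> 0} \<subseteq> \<Omega>
           \<longrightarrow> (\<forall>x\<in>\<Omega>. ennreal \<bar>u x\<bar>
                  \<le> ennreal (c * infdist x (frontier \<Omega>) powr (1 - \<kappa>))
                     * frac_max \<kappa> (\<lambda>y. norm (g y)) x)"
proof -
  define c where "c = 2 powr (real DIM('a) + 1 - \<kappa>) / ((1 - \<kappa>) * b * measure lborel (ball (0::'a) 1))"
  have "c > 0"
    unfolding c_def using assms content_ball_pos[of 1 "0::'a"] by simp
  show ?thesis
  proof (intro exI[of _ c] conjI \<open>c > 0\<close> allI impI ballI, elim conjE)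
    fix \<Omega> :: "'a set" and u :: "'a \<Rightarrow> real" and g :: "'a \<Rightarrow> 'a" and x
    assume \<Omega>: "open \<Omega>" "\<Omega> \<noteq> UNIV" "outer_regular b \<Omega>"
      and der: "\<forall>x. (u has_derivative (\<lambda>h. g x \<bullet> h)) (at x)" and g: "continuous_on UNIV g"
      and supp: "closure {x. u x \<noteq> 0} \<subseteq> \<Omega>" and x: "x \<in> \<Omega>"
    show "ennreal \<bar>u x\<bar> \<le> ennreal (c * infdist x (frontier \<Omega>) powr (1 - \<kappa>)) * frac_max \<kappa> (\<lambda>y. norm (g y)) x"
      unfolding c_def
      by (rule abs_le_infdist_frontier_powr_frac_max[OF \<Omega> assms(2) der[rule_format] g supp x assms(4)])
  qed
qed

end
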